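(* Let $f:\{0,1\}^n\to\{0,1\}$ be a Boolean function and $c\in\mathbb{R}^n_{\ge0}$ a cost vector. For every $\varepsilon\in(0,0.5]$ and $\beta>0$, there exists an $\varepsilon$-error online algorithm with unit investment $\beta$ (namely the algorithm Warmup-IPRR$(f,\varepsilon)$ described in the context) whose expected cost satisfies \[ \mathrm{avg\text{-}cost}_c \le \beta n + \frac{\mathrm{opt}^{\mathrm{w}}_0(f,c)}{\varepsilon}\sum_{i=1}^n \mathrm{Inf}_i[f]\left(1+\ln\frac{1}{\mathrm{Inf}_i[f]}\right). \]
   Context: Online priced query model: $f:\{0,1\}^n\to\{0,1\}$ is given; the input $x\in\{0,1\}^n$ and costs $c\in\mathbb{R}^n_{\ge0}$ are unknown. The algorithm maintains investments $\theta\in\mathbb{R}^n_{\ge0}$, initially $0$; each step it increases one $\theta_i$ by $\beta$; $x_i$ is revealed once $\theta_i\ge c_i$. The cost on input $x$ is $\|\theta\|_1$ at halting. Offline algorithms know $c$ and pay $c_i$ to reveal $x_i$. An algorithm is $\varepsilon$-error if $\Pr_{x}[\text{output}\ne f(x)]\le\varepsilon$ for uniform $x$. $\mathrm{avg\text{-}cost}_c$ is the expected cost over uniform $x$; $\mathrm{worst\text{-}cost}_c$ is the max over $x$. $\mathrm{opt}^{\mathrm{w}}_0(f,c)$ is the infimum of worst-case cost over all zero-error algorithms (offline or online). $\mathrm{Inf}_i[f]=\Pr_x[f(x)\ne f(x^{\oplus i})]$ ($x^{\oplus i}$: $x$ with bit $i$ flipped); terms with $\mathrm{Inf}_i[f]=0$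 contribute $0$. For a restriction $\pi$ (partial assignment of variables), $f_\pi$ is the restricted function, and $\mathrm{bias}(g)=\min\{\Pr_x[g(x)\ne0],\Pr_x[g(x)\ne1]\}$. Warmup-IPRR$(f,\varepsilon)$: start with $\theta=0$, $\pi=\emptyset$; while $\mathrm{bias}(f_\pi)>\varepsilon$: pick $i^*\in\arg\max_i \mathrm{Inf}_i[f_\pi]/\theta_i$, increase $\theta_{i^*}$ by $\beta$, and if $x_{i^*}$ is revealed as $b$, add $x_{i^*}\mapsto b$ to $\pi$; finally output $\mathbf{1}\{\mathbb{E}_x[f_\pi(x)]\ge 1/2\}$. *)

theory Defs
  imports Complex_Main "HOL-Library.FuncSet" "HOL-Library.Extended_Real"
begin

text \<open>Boolean cube {0,1}^n: extensional functions on {0..<n} with values in bool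
  (False = 0, True = 1). Probabilities are with respect to the uniform distribution.\<close>

definition cube :: "nat \<Rightarrow> (nat \<Rightarrow> bool) set" where
  "cube n = PiE {..<n} (\<lambda>_. UNIV)"

definition prob :: "nat \<Rightarrow> ((nat \<Rightarrow> bool) \<Rightarrow> bool) \<Rightarrow> real" where
  "prob n P = real (card {x \<in> cube n. P x}) / 2 ^ n"

definition flip :: "(nat \<Rightarrow> bool) \<Rightarrow> nat \<Rightarrow> (nat \<Rightarrow> bool)" where
  "flip x i = x(i := \<not> x i)"

definition infl :: "nat \<Rightarrow> ((nat \<Rightarrow> bool) \<Rightarrow> bool) \<Rightarrow> nat \<Rightarrow> real" where
  "infl n g i = prob n (\<lambda>x. g x \<noteq> g (flip x i))"

definition bias :: "nat \<Rightarrow> ((nat \<Rightarrow> bool) \<Rightarrow> bool) \<Rightarrow> real" where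
  "bias n g = min (prob n (\<lambda>x. g x \<noteq> False)) (prob n (\<lambda>x. g x \<noteq> True))"

text \<open>Restriction f_\<pi> by a partial assignment \<pi> (viewed as a function of all n variables,
  ignoring the fixed ones).\<close>
definition restr :: "((nat \<Rightarrow> bool) \<Rightarrow> bool) \<Rightarrow> (nat \<Rightarrow> bool option) \<Rightarrow> (nat \<Rightarrow> bool) \<Rightarrow> bool" where
  "restr f \<pi> = (\<lambda>x. f (\<lambda>i. case \<pi> i of Some b \<Rightarrow> b | None \<Rightarrow> x i))"

text \<open>The ratio Inf_i/\<theta>_i, with the convention a/0 = \<infinity> for a > 0 and 0/0 = 0.\<close>
definition ratio :: "real \<Rightarrow> real \<Rightarrow> ereal" where
  "ratio a t = (if t = 0 then (if a > 0 then \<infinity> else 0) else ereal (a / t))"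

text \<open>States of Warmup-IPRR: investments \<theta> and partial assignment \<pi>.
  A tie-breaking rule sel picks the index to invest in, given the current state.\<close>
type_synonym state = "(nat \<Rightarrow> real) \<times> (nat \<Rightarrow> bool option)"

definition is_iprr_rule ::
  "nat \<Rightarrow> ((nat \<Rightarrow> bool) \<Rightarrow> bool) \<Rightarrow> real \<Rightarrow> (state \<Rightarrow> nat) \<Rightarrow> bool" where
  "is_iprr_rule n f \<epsilon> sel \<longleftrightarrow>
     (\<forall>\<theta> \<pi>. bias n (restr f \<pi>) > \<epsilon> \<longrightarrow>
        sel (\<theta>, \<pi>) < n \<and>
        (\<forall>j<n. ratio (infl n (restr f \<pi>) j) (\<theta> j)
               \<le> ratio (infl n (restr f \<pi>) (sel (\<theta>, \<pi>))) (\<theta> (sel (\<theta>, \<pi>)))))"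

definition iprr_step ::
  "(nat \<Rightarrow> real) \<Rightarrow> real \<Rightarrow> (state \<Rightarrow> nat) \<Rightarrow> (nat \<Rightarrow> bool) \<Rightarrow> state \<Rightarrow> state" where
  "iprr_step c \<beta> sel x s =
     (let i = sel s; \<theta>' = (fst s)(i := fst s i + \<beta>)
      in (\<theta>', if \<theta>' i \<ge> c i then (snd s)(i \<mapsto> x i) else snd s))"

definition iprr_run ::
  "(nat \<Rightarrow> real) \<Rightarrow> real \<Rightarrow> (state \<Rightarrow> nat) \<Rightarrow> (nat \<Rightarrow> bool) \<Rightarrow> nat \<Rightarrow> state" where
  "iprr_run c \<beta> sel x k = (iprr_step c \<beta> sel x ^^ k) (\<lambda>_. 0, Map.empty)"

definition iprr_halts_at ::
  "nat \<Rightarrow> ((nat \<Rightarrow> bool) \<Rightarrow> bool) \<Rightarrow> (nat \<Rightarrow> real) \<Rightarrow> real \<Rightarrow> real \<Rightarrow> (state \<Rightarrow> nat)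
     \<Rightarrow> (nat \<Rightarrow> bool) \<Rightarrow> nat \<Rightarrow> bool" where
  "iprr_halts_at n f c \<epsilon> \<beta> sel x k \<longleftrightarrow>
     bias n (restr f (snd (iprr_run c \<beta> sel x k))) \<le> \<epsilon>"

definition iprr_time ::
  "nat \<Rightarrow> ((nat \<Rightarrow> bool) \<Rightarrow> bool) \<Rightarrow> (nat \<Rightarrow> real) \<Rightarrow> real \<Rightarrow> real \<Rightarrow> (state \<Rightarrow> nat)
     \<Rightarrow> (nat \<Rightarrow> bool) \<Rightarrow> nat" where
  "iprr_time n f c \<epsilon> \<beta> sel x = (LEAST k. iprr_halts_at n f c \<epsilon> \<beta> sel x k)"

definition iprr_final ::
  "nat \<Rightarrow> ((nat \<Rightarrow> bool) \<Rightarrow> bool) \<Rightarrow> (nat \<Rightarrow> real) \<Rightarrow> real \<Rightarrow> real \<Rightarrow> (state \<Rightarrow> nat)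
     \<Rightarrow> (nat \<Rightarrow> bool) \<Rightarrow> state" where
  "iprr_final n f c \<epsilon> \<beta> sel x = iprr_run c \<beta> sel x (iprr_time n f c \<epsilon> \<beta> sel x)"

definition iprr_output ::
  "nat \<Rightarrow> ((nat \<Rightarrow> bool) \<Rightarrow> bool) \<Rightarrow> (nat \<Rightarrow> real) \<Rightarrow> real \<Rightarrow> real \<Rightarrow> (state \<Rightarrow> nat)
     \<Rightarrow> (nat \<Rightarrow> bool) \<Rightarrow> bool" where
  "iprr_output n f c \<epsilon> \<beta> sel x =
     (prob n (restr f (snd (iprr_final n f c \<epsilon> \<beta> sel x))) \<ge> 1/2)"

definition iprr_cost ::
  "nat \<Rightarrow> ((nat \<Rightarrow> bool) \<Rightarrow> bool) \<Rightarrow> (nat \<Rightarrow> real) \<Rightarrow> real \<Rightarrow> real \<Rightarrow> (state \<Rightarrow> nat)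
     \<Rightarrow> (nat \<Rightarrow> bool) \<Rightarrow> real" where
  "iprr_cost n f c \<epsilon> \<beta> sel x = (\<Sum>i<n. fst (iprr_final n f c \<epsilon> \<beta> sel x) i)"

definition iprr_avg_cost ::
  "nat \<Rightarrow> ((nat \<Rightarrow> bool) \<Rightarrow> bool) \<Rightarrow> (nat \<Rightarrow> real) \<Rightarrow> real \<Rightarrow> real \<Rightarrow> (state \<Rightarrow> nat) \<Rightarrow> real" where
  "iprr_avg_cost n f c \<epsilon> \<beta> sel =
     (\<Sum>x\<in>cube n. iprr_cost n f c \<epsilon> \<beta> sel x) / 2 ^ n"

text \<open>Offline algorithms = adaptive query strategies = decision trees. Querying x_i costs c_i.\<close>
datatype dtree = Leaf bool | Query nat dtree dtree  (* Query i t0 t1: t0 if x_i = 0, t1 if x_i = 1 *)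

fun dt_eval :: "dtree \<Rightarrow> (nat \<Rightarrow> bool) \<Rightarrow> bool" where
  "dt_eval (Leaf b) x = b"
| "dt_eval (Query i t0 t1) x = (if x i then dt_eval t1 x else dt_eval t0 x)"

fun dt_cost :: "(nat \<Rightarrow> real) \<Rightarrow> dtree \<Rightarrow> (nat \<Rightarrow> bool) \<Rightarrow> real" where
  "dt_cost c (Leaf b) x = 0"
| "dt_cost c (Query i t0 t1) x = c i + (if x i then dt_cost c t1 x else dt_cost c t0 x)"

fun dt_vars :: "dtree \<Rightarrow> nat set" where
  "dt_vars (Leaf b) = {}"
| "dt_vars (Query i t0 t1) = insert i (dt_vars t0 \<union> dt_vars t1)"

definition dt_worst_cost :: "nat \<Rightarrow> (nat \<Rightarrow> real) \<Rightarrow> dtree \<Rightarrow> real" where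
  "dt_worst_cost n c t = Max ((\<lambda>x. dt_cost c t x) ` cube n)"

definition opt_w0 :: "nat \<Rightarrow> ((nat \<Rightarrow> bool) \<Rightarrow> bool) \<Rightarrow> (nat \<Rightarrow> real) \<Rightarrow> real" where
  "opt_w0 n f c = Inf {dt_worst_cost n c t | t.
      dt_vars t \<subseteq> {..<n} \<and> (\<forall>x\<in>cube n. dt_eval t x = f x)}"

end

theory Submission
  imports Defs
begin

text \<open>
  The cost bound rests on an OSSS-type inequality: for a decision tree \<open>T\<close> computing \<open>f\<close>
  and a partial assignment \<open>\<pi>\<close>, the bias of \<open>f\<^sub>\<pi>\<close> is at most the expected sum of the
  influences \<open>Inf\<^sub>j[f\<^sub>\<pi>]\<close> over the variables that \<open>T\<close> queries. As long as unrevealed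
  investments stay below their costs and the bias exceeds \<open>\<epsilon>\<close>, choosing the coordinate \<open>i\<close>
  maximising \<open>Inf\<^sub>i/\<theta>\<^sub>i\<close> turns this into \<open>\<epsilon> \<theta>\<^sub>i \<le> W Inf\<^sub>i[f\<^sub>\<pi>]\<close>, where \<open>W\<close> is the
  worst-case cost of \<open>T\<close>.

  Revealing a variable splits the run into two equally likely branches, on which the
  influences average to at most their current values. Writing \<open>m\<^sub>j\<close> for the running maximum of
  \<open>Inf\<^sub>j[f\<^sub>\<pi>]\<close> along a branch, the potential
  \<open>\<Sum>\<^sub>j \<beta> + W/\<epsilon> (m\<^sub>j + Inf\<^sub>j[f\<^sub>\<pi>] ln (1/m\<^sub>j))\<close> is therefore a supermartingale dominating the
  total investment, and it starts at \<open>\<beta> n + W/\<epsilon> \<Sum>\<^sub>j Inf\<^sub>j[f] (1 + ln (1/Inf\<^sub>j[f]))\<close>. The same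
  averaging applied to the majority output, which errs with probability \<open>bias(f\<^sub>\<pi>) \<le> \<epsilon>\<close> once
  the run halts, bounds the error; termination holds because every step uses up \<open>\<beta>\<close> of the
  finite slack \<open>\<Sum>\<^sub>j (c\<^sub>j + \<beta> - \<theta>\<^sub>j)\<close>.
\<close>

section \<open>The Boolean cube\<close>

definition fill :: "(nat \<Rightarrow> bool option) \<Rightarrow> (nat \<Rightarrow> bool) \<Rightarrow> nat \<Rightarrow> bool" where
  "fill \<pi> x = (\<lambda>i. case \<pi> i of Some b \<Rightarrow> b | None \<Rightarrow> x i)"

definition half_cube :: "nat \<Rightarrow> nat \<Rightarrow> bool \<Rightarrow> (nat \<Rightarrow> bool) set" where
  "half_cube n i b = {x \<in> cube n. x i = b}"

lemma restr_eq_fill: "restr f \<pi> x = f (fill \<pi> x)"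
  by (simp add: restr_def fill_def)

lemma restr_empty [simp]: "restr f Map.empty = f"
  by (simp add: restr_def)

lemma fill_empty [simp]: "fill Map.empty x = x"
  by (simp add: fill_def)

lemma fill_flip_fixed: "i \<in> dom \<pi> \<Longrightarrow> fill \<pi> (flip x i) = fill \<pi> x"
  by (auto simp: fill_def flip_def fun_eq_iff split: option.splits)

lemma fill_flip_free: "i \<notin> dom \<pi> \<Longrightarrow> fill \<pi> (flip x i) = flip (fill \<pi> x) i"
  by (auto simp: fill_def flip_def fun_eq_iff split: option.splits)

lemma fill_upd_free: "i \<notin> dom \<pi> \<Longrightarrow> fill (\<pi>(i \<mapsto> b)) x = fill \<pi> (x(i := b))"
  by (auto simp: fill_def fun_eq_iff split: option.splits)

lemma fill_in_cube:
  assumes "dom \<pi> \<subseteq> {..<n}" and "x \<in> cube n"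
  shows "fill \<pi> x \<in> cube n"
proof -
  have "\<pi> i = None" if "n \<le> i" for i
    using assms(1) that by fastforce
  then show ?thesis
    using assms(2) by (auto simp: cube_def PiE_iff extensional_def fill_def)
qed

lemma flip_flip [simp]: "flip (flip x i) i = x"
  by (simp add: flip_def)

lemma flip_same [simp]: "flip x i i = (\<not> x i)"
  by (simp add: flip_def)

lemma finite_cube [simp]: "finite (cube n)"
  by (simp add: cube_def finite_PiE)

lemma card_cube: "card (cube n) = 2 ^ n"
  by (simp add: cube_def card_PiE)

lemma cube_nonempty: "cube n \<noteq> {}"
  by (simp add: cube_def PiE_eq_empty_iff)

lemma flip_in_cube: "i < n \<Longrightarrow> x \<in> cube n \<Longrightarrow> flip x i \<in> cube n"
  by (auto simp: cube_def flip_def PiE_iff extensional_def)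

lemma sum_cube_of_bool: "(\<Sum>x\<in>cube n. of_bool (P x)) = 2 ^ n * prob n P"
proof -
  have "(\<Sum>x\<in>cube n. of_bool (P x) :: real) = (\<Sum>x\<in>{x \<in> cube n. P x}. 1)"
    by (simp add: sum.inter_filter of_bool_def del: sum_constant)
  then show ?thesis
    by (simp add: prob_def)
qed

lemma prob_nonneg: "0 \<le> prob n P"
  by (simp add: prob_def)

lemma prob_le_1: "prob n P \<le> 1"
proof -
  have "card {x \<in> cube n. P x} \<le> card (cube n)"
    by (rule card_mono) auto
  then show ?thesis
    by (simp add: prob_def card_cube)
qed

lemma prob_not: "prob n (\<lambda>x. \<not> P x) = 1 - prob n P"
proof -
  have "(\<Sum>x\<in>cube n. of_bool (\<not> P x)) = (\<Sum>x\<in>cube n. 1 - of_bool (P x) :: real)"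
    by (rule sum.cong) auto
  then have "2 ^ n * (prob n (\<lambda>x. \<not> P x) + prob n P) = 2 ^ n * 1"
    by (simp add: sum_cube_of_bool sum_subtractf card_cube algebra_simps)
  then show ?thesis
    by (simp only: mult_cancel_left) simp
qed

lemma prob_eq_0_iff: "prob n P = 0 \<longleftrightarrow> (\<forall>x\<in>cube n. \<not> P x)"
  by (auto simp: prob_def)

lemma finite_half_cube [simp]: "finite (half_cube n i b)"
  by (simp add: half_cube_def)

lemma sum_cube_halves:
  fixes F :: "(nat \<Rightarrow> bool) \<Rightarrow> 'a::comm_monoid_add"
  shows "(\<Sum>x\<in>cube n. F x) = (\<Sum>x\<in>half_cube n i b. F x) + (\<Sum>x\<in>half_cube n i (\<not> b). F x)"
proof -
  have "cube n = half_cube n i b \<union> half_cube n i (\<not> b)"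
    by (auto simp: half_cube_def)
  moreover have "half_cube n i b \<inter> half_cube n i (\<not> b) = {}"
    by (auto simp: half_cube_def)
  ultimately show ?thesis
    by (simp add: sum.union_disjoint)
qed

lemma sum_half_cube_flip:
  assumes "i < n"
  shows "(\<Sum>x\<in>half_cube n i (\<not> b). F x) = (\<Sum>x\<in>half_cube n i b. F (flip x i))"
  by (rule sum.reindex_bij_witness[where i="\<lambda>x. flip x i" and j="\<lambda>x. flip x i"])
     (auto simp: half_cube_def flip_in_cube assms)

lemma sum_cube_flip_invariant:
  fixes F :: "(nat \<Rightarrow> bool) \<Rightarrow> real"
  assumes "i < n" and "\<And>x. x \<in> cube n \<Longrightarrow> F (flip x i) = F x"
  shows "(\<Sum>x\<in>cube n. F x) = 2 * (\<Sum>x\<in>half_cube n i b. F x)"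
proof -
  have "(\<Sum>x\<in>half_cube n i (\<not> b). F x) = (\<Sum>x\<in>half_cube n i b. F x)"
    unfolding sum_half_cube_flip[OF assms(1)]
    by (rule sum.cong) (auto simp: half_cube_def assms(2))
  then show ?thesis
    using sum_cube_halves[of F n i b] by simp
qed

lemma sum_cube_fill_split:
  fixes H :: "(nat \<Rightarrow> bool) \<Rightarrow> real"
  assumes "i < n" and "i \<notin> dom \<pi>"
  shows "2 * (\<Sum>x\<in>cube n. H (fill \<pi> x))
    = (\<Sum>x\<in>cube n. H (fill (\<pi>(i \<mapsto> True)) x)) + (\<Sum>x\<in>cube n. H (fill (\<pi>(i \<mapsto> False)) x))"
proof -
  have half: "(\<Sum>x\<in>cube n. H (fill (\<pi>(i \<mapsto> b)) x)) = 2 * (\<Sum>x\<in>half_cube n i b. H (fill \<pi> x))"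
    for b
  proof -
    have "(\<Sum>x\<in>cube n. H (fill (\<pi>(i \<mapsto> b)) x)) = 2 * (\<Sum>x\<in>half_cube n i b. H (fill (\<pi>(i \<mapsto> b)) x))"
      by (rule sum_cube_flip_invariant[OF assms(1)]) (simp add: fill_flip_fixed)
    also have "\<dots> = 2 * (\<Sum>x\<in>half_cube n i b. H (fill \<pi> x))"
      by (intro arg_cong2[where f="(*)"] sum.cong)
         (auto simp: half_cube_def fill_upd_free assms(2) fun_upd_idem)
    finally show ?thesis .
  qed
  show ?thesis
    unfolding half using sum_cube_halves[of "\<lambda>x. H (fill \<pi> x)" n i True] by simp
qed

section \<open>Influences\<close>

lemma infl_nonneg: "0 \<le> infl n g i"
  by (simp add: infl_def prob_nonneg)

lemma infl_le_1: "infl n g i \<le> 1"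
  by (simp add: infl_def prob_le_1)

lemma infl_eq_0_iff: "infl n g i = 0 \<longleftrightarrow> (\<forall>x\<in>cube n. g x = g (flip x i))"
  by (simp add: infl_def prob_eq_0_iff)

lemma infl_restr_fixed: "i \<in> dom \<pi> \<Longrightarrow> infl n (restr f \<pi>) i = 0"
  by (simp add: infl_eq_0_iff restr_eq_fill fill_flip_fixed)

lemma sum_cube_restr_flips:
  assumes "i \<notin> dom \<pi>"
  shows "(\<Sum>x\<in>cube n. of_bool (f (fill \<pi> x) \<noteq> f (flip (fill \<pi> x) i))) = 2 ^ n * infl n (restr f \<pi>) i"
  by (simp add: infl_def sum_cube_of_bool restr_eq_fill fill_flip_free[OF assms])

lemma bias_le_prob: "bias n g \<le> prob n (\<lambda>x. g x \<noteq> b)"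
  by (cases b) (simp_all add: bias_def)

lemma prob_majority_error: "prob n (\<lambda>x. (1/2 \<le> prob n g) \<noteq> g x) = bias n g"
proof -
  have "prob n (\<lambda>x. g x \<noteq> True) = 1 - prob n g"
    using prob_not[of n g] by simp
  then show ?thesis
    by (cases "1/2 \<le> prob n g") (auto simp: bias_def prob_not)
qed

definition splice_below :: "nat \<Rightarrow> (nat \<Rightarrow> bool) \<Rightarrow> (nat \<Rightarrow> bool) \<Rightarrow> nat \<Rightarrow> bool" where
  "splice_below k y x = (\<lambda>i. if i < k then y i else x i)"

lemma splice_below_0 [simp]: "splice_below 0 y x = x"
  by (simp add: splice_below_def)

lemma splice_below_full: "x \<in> cube n \<Longrightarrow> y \<in> cube n \<Longrightarrow> splice_below n y x = y"
  by (auto simp: splice_below_def cube_def PiE_iff extensional_def fun_eq_iff)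

lemma splice_below_Suc:
  "splice_below (Suc k) y x = (if y k = x k then splice_below k y x else flip (splice_below k y x) k)"
  by (auto simp: splice_below_def flip_def fun_eq_iff less_Suc_eq)

lemma eq_if_no_infl:
  assumes no_infl: "\<forall>i<n. infl n g i = 0" and x: "x \<in> cube n" and y: "y \<in> cube n"
  shows "g y = g x"
proof -
  have "splice_below k y x \<in> cube n \<and> g (splice_below k y x) = g x" for k
  proof (induction k)
    case (Suc k)
    show ?case
    proof (cases "y k = x k")
      case False
      then have "k < n"
        using x y by (auto simp: cube_def PiE_iff extensional_def)
      then show ?thesis
        using Suc False no_infl flip_in_cube by (simp add: splice_below_Suc infl_eq_0_iff)
    qed (use Suc in \<open>simp add: splice_below_Suc\<close>)
  qed (use x in simp)
  then show ?thesis
    using splice_below_full[OF x y] by metis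
qed

lemma bias_pos_imp_infl_pos:
  assumes "0 < bias n g"
  shows "\<exists>i<n. 0 < infl n g i"
proof (rule ccontr)
  assume "\<not> ?thesis"
  then have "\<forall>i<n. infl n g i = 0"
    using infl_nonneg by (meson antisym not_le)
  moreover obtain x0 where x0: "x0 \<in> cube n"
    using cube_nonempty by blast
  ultimately have "prob n (\<lambda>x. g x \<noteq> g x0) = 0"
    using eq_if_no_infl by (auto simp: prob_eq_0_iff)
  then show False
    using bias_le_prob[of n g "g x0"] assms by simp
qed

lemma infl_restr_upd_le:
  assumes "i < n" and "i \<notin> dom \<pi>"
  shows "infl n (restr f (\<pi>(i \<mapsto> True))) j + infl n (restr f (\<pi>(i \<mapsto> False))) j
    \<le> 2 * infl n (restr f \<pi>) j"
proof (cases "j = i \<or> j \<in> dom \<pi>")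
  case True
  then have "j \<in> dom (\<pi>(i \<mapsto> b))" for b
    by auto
  then show ?thesis
    by (simp add: infl_restr_fixed infl_nonneg)
next
  case False
  then have free: "j \<notin> dom \<pi>" "j \<notin> dom (\<pi>(i \<mapsto> b))" for b
    by auto
  let ?H = "\<lambda>z. of_bool (f z \<noteq> f (flip z j)) :: real"
  have "2 ^ n * (infl n (restr f (\<pi>(i \<mapsto> True))) j + infl n (restr f (\<pi>(i \<mapsto> False))) j)
      = (\<Sum>x\<in>cube n. ?H (fill (\<pi>(i \<mapsto> True)) x)) + (\<Sum>x\<in>cube n. ?H (fill (\<pi>(i \<mapsto> False)) x))"
    by (simp only: sum_cube_restr_flips[OF free(2)[of True]]
        sum_cube_restr_flips[OF free(2)[of False]] distrib_left)
  also have "\<dots> = 2 * (\<Sum>x\<in>cube n. ?H (fill \<pi> x))"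
    by (rule sum_cube_fill_split[OF assms, symmetric])
  also have "\<dots> = 2 ^ n * (2 * infl n (restr f \<pi>) j)"
    unfolding sum_cube_restr_flips[OF free(1)] by simp
  finally show ?thesis
    by simp
qed

section \<open>Decision trees and an OSSS-type inequality\<close>

lemma dt_cost_nonneg: "(\<forall>j\<in>dt_vars T. 0 \<le> c j) \<Longrightarrow> 0 \<le> dt_cost c T x"
  by (induction T) auto

lemma dt_cost_le_weights_mult:
  "(\<forall>j\<in>dt_vars T. a j \<le> r * b j) \<Longrightarrow> dt_cost a T x \<le> r * dt_cost b T x"
  by (induction T) (auto simp: algebra_simps)

lemma dt_cost_le_worst_cost: "x \<in> cube n \<Longrightarrow> dt_cost c T x \<le> dt_worst_cost n c T"
  by (simp add: dt_worst_cost_def)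

lemma dt_worst_cost_nonneg:
  assumes "dt_vars T \<subseteq> {..<n}" and "\<forall>i<n. 0 \<le> c i"
  shows "0 \<le> dt_worst_cost n c T"
proof -
  obtain x where "x \<in> cube n"
    using cube_nonempty by blast
  then show ?thesis
    using dt_cost_nonneg[of T c x] dt_cost_le_worst_cost[of x n c T] assms by force
qed

fun full_dtree :: "((nat \<Rightarrow> bool) \<Rightarrow> bool) \<Rightarrow> nat \<Rightarrow> (nat \<Rightarrow> bool) \<Rightarrow> dtree" where
  "full_dtree f 0 a = Leaf (f a)"
| "full_dtree f (Suc k) a = Query k (full_dtree f k (a(k := False))) (full_dtree f k (a(k := True)))"

lemma splice_below_upd: "splice_below k y (x(k := y k)) = splice_below (Suc k) y x"
  by (auto simp: splice_below_def fun_eq_iff less_Suc_eq)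

lemma dt_eval_full_dtree: "dt_eval (full_dtree f k a) x = f (splice_below k x a)"
proof (induction k arbitrary: a)
  case (Suc k)
  have "dt_eval (full_dtree f (Suc k) a) x = dt_eval (full_dtree f k (a(k := x k))) x"
    by simp
  then show ?case
    by (simp only: Suc.IH splice_below_upd)
qed simp

lemma dt_vars_full_dtree: "dt_vars (full_dtree f k a) \<subseteq> {..<k}"
  by (induction k arbitrary: a) (simp, force)

lemma ex_dtree_computing: "\<exists>T. dt_vars T \<subseteq> {..<n} \<and> (\<forall>x\<in>cube n. dt_eval T x = f x)"
proof -
  obtain a where "a \<in> cube n"
    using cube_nonempty by blast
  then show ?thesis
    using dt_vars_full_dtree dt_eval_full_dtree splice_below_full by metis
qed

lemma sum_cube_disagree_le:
  fixes g h :: "(nat \<Rightarrow> bool) \<Rightarrow> bool"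
  assumes "i < n" and h_flip: "\<And>x. h (flip x i) = h x"
  shows "(\<Sum>x\<in>cube n. of_bool (g x \<noteq> h x) :: real)
    \<le> 2 * (\<Sum>x\<in>half_cube n i b. of_bool (g x \<noteq> h x))
      + (\<Sum>x\<in>half_cube n i b. of_bool (g x \<noteq> g (flip x i)))"
proof -
  have "(\<Sum>x\<in>half_cube n i (\<not> b). of_bool (g x \<noteq> h x) :: real)
      = (\<Sum>x\<in>half_cube n i b. of_bool (g (flip x i) \<noteq> h x))"
    by (simp only: sum_half_cube_flip[OF assms(1)] h_flip)
  also have "\<dots> \<le> (\<Sum>x\<in>half_cube n i b. of_bool (g x \<noteq> h x) + of_bool (g x \<noteq> g (flip x i)))"
    by (rule sum_mono) auto
  finally show ?thesis
    using sum_cube_halves[of "\<lambda>x. of_bool (g x \<noteq> h x) :: real" n i b] by (simp add: sum.distrib)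
qed

lemma sum_cube_fill_halves:
  fixes F :: "(nat \<Rightarrow> bool) \<Rightarrow> (nat \<Rightarrow> bool) \<Rightarrow> real"
  assumes "i \<notin> dom \<rho>"
  shows "(\<Sum>x\<in>cube n. F x (fill \<rho> x))
    = (\<Sum>x\<in>half_cube n i True. F x (fill (\<rho>(i \<mapsto> True)) x))
      + (\<Sum>x\<in>half_cube n i False. F x (fill (\<rho>(i \<mapsto> False)) x))"
proof -
  have "fill (\<rho>(i \<mapsto> b)) x = fill \<rho> x" if "x \<in> half_cube n i b" for x b
    using that by (simp add: half_cube_def fill_upd_free[OF assms] fun_upd_idem)
  then show ?thesis
    using sum_cube_halves[of "\<lambda>x. F x (fill \<rho> x)" n i True]
    by (metis (no_types, lifting) sum.cong)
qed

lemma sum_disagree_query_free: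
  assumes "i < n" and "i \<notin> dom \<rho>"
  shows "(\<Sum>x\<in>cube n. of_bool (g x \<noteq> dt_eval T1 (fill (\<rho>(i \<mapsto> True)) x)))
      + (\<Sum>x\<in>cube n. of_bool (g x \<noteq> dt_eval T0 (fill (\<rho>(i \<mapsto> False)) x)))
    \<le> 2 * (\<Sum>x\<in>cube n. of_bool (g x \<noteq> dt_eval (Query i T0 T1) (fill \<rho> x))) + 2 ^ n * infl n g i"
proof -
  define E where "E b x = dt_eval (if b then T1 else T0) (fill (\<rho>(i \<mapsto> b)) x)" for b x
  have query: "dt_eval (Query i T0 T1) (fill (\<rho>(i \<mapsto> b)) x) = E b x" for b x
    by (simp add: E_def fill_def)
  have disagree: "(\<Sum>x\<in>cube n. of_bool (g x \<noteq> E b x) :: real)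
      \<le> 2 * (\<Sum>x\<in>half_cube n i b. of_bool (g x \<noteq> E b x))
        + (\<Sum>x\<in>half_cube n i b. of_bool (g x \<noteq> g (flip x i)))" for b
    by (rule sum_cube_disagree_le[OF assms(1)]) (simp add: E_def fill_flip_fixed)
  have query_halves: "(\<Sum>x\<in>cube n. of_bool (g x \<noteq> dt_eval (Query i T0 T1) (fill \<rho> x)) :: real)
      = (\<Sum>x\<in>half_cube n i True. of_bool (g x \<noteq> E True x))
        + (\<Sum>x\<in>half_cube n i False. of_bool (g x \<noteq> E False x))"
    using sum_cube_fill_halves[OF assms(2),
        where F="\<lambda>x z. of_bool (g x \<noteq> dt_eval (Query i T0 T1) z)" and n=n]
    by (simp only: query)
  have flips: "(\<Sum>x\<in>half_cube n i True. of_bool (g x \<noteq> g (flip x i)))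
      + (\<Sum>x\<in>half_cube n i False. of_bool (g x \<noteq> g (flip x i))) = 2 ^ n * infl n g i"
    using sum_cube_halves[of "\<lambda>x. of_bool (g x \<noteq> g (flip x i)) :: real" n i True]
    by (simp add: infl_def sum_cube_of_bool)
  show ?thesis
    using disagree[of True] disagree[of False] query_halves flips
    unfolding E_def if_True if_False by linarith
qed

lemma sum_dt_cost_query_free:
  assumes "i < n" and "i \<notin> dom \<rho>"
  shows "(\<Sum>x\<in>cube n. dt_cost w T1 (fill (\<rho>(i \<mapsto> True)) x))
      + (\<Sum>x\<in>cube n. dt_cost w T0 (fill (\<rho>(i \<mapsto> False)) x))
    = 2 * (\<Sum>x\<in>cube n. dt_cost w (Query i T0 T1) (fill \<rho> x)) - 2 * 2 ^ n * w i"
proof -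
  have "dt_cost w (Query i T0 T1) (fill (\<rho>(i \<mapsto> b)) x)
      = w i + dt_cost w (if b then T1 else T0) (fill (\<rho>(i \<mapsto> b)) x)" for b x
    by (simp add: fill_def)
  then show ?thesis
    using sum_cube_fill_split[where \<pi>=\<rho> and i=i and H="dt_cost w (Query i T0 T1)", OF assms]
    by (simp add: sum.distrib card_cube)
qed

text \<open>The tree reads the input completed by \<open>\<rho>\<close>; generalising over \<open>\<rho>\<close> lets the induction
  pass to the subtrees of a query.\<close>
lemma bias_le_disagree_plus_infl_cost:
  assumes "dt_vars T \<subseteq> {..<n}"
  shows "2 ^ n * bias n g \<le> (\<Sum>x\<in>cube n. of_bool (g x \<noteq> dt_eval T (fill \<rho> x)))
    + (\<Sum>x\<in>cube n. dt_cost (infl n g) T (fill \<rho> x))"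
  using assms
proof (induction T arbitrary: \<rho>)
  case (Leaf b)
  then show ?case
    using bias_le_prob[of n g b] by (simp add: sum_cube_of_bool)
next
  case (Query i T0 T1)
  let ?D = "\<lambda>T \<rho>. \<Sum>x\<in>cube n. of_bool (g x \<noteq> dt_eval T (fill \<rho> x)) :: real"
  let ?C = "\<lambda>T \<rho>. \<Sum>x\<in>cube n. dt_cost (infl n g) T (fill \<rho> x)"
  have i: "i < n"
    using Query.prems by simp
  have IH: "2 ^ n * bias n g \<le> ?D (if b then T1 else T0) \<rho>' + ?C (if b then T1 else T0) \<rho>'" for b \<rho>'
    using Query by (cases b) auto
  show ?case
  proof (cases "\<rho> i")
    case None
    then have free: "i \<notin> dom \<rho>"
      by auto
    show ?thesis
      using IH[of False "\<rho>(i \<mapsto> False)"] IH[of True "\<rho>(i \<mapsto> True)"]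
        sum_disagree_query_free[OF i free, of g T1 T0]
        sum_dt_cost_query_free[OF i free, of "infl n g" T1 T0]
        mult_nonneg_nonneg[OF zero_le_power[of 2 n] infl_nonneg[of n g i]]
      unfolding if_True if_False by linarith
  next
    case (Some b)
    have "?D (Query i T0 T1) \<rho> = ?D (if b then T1 else T0) \<rho>"
      using Some by (simp add: fill_def)
    moreover have "?C (if b then T1 else T0) \<rho> \<le> ?C (Query i T0 T1) \<rho>"
      using Some infl_nonneg[of n g i] by (intro sum_mono) (simp add: fill_def)
    ultimately show ?thesis
      using IH[of b \<rho>] by linarith
  qed
qed

lemma bias_le_worst_cost:
  assumes T: "dt_vars T \<subseteq> {..<n}" "\<forall>x\<in>cube n. dt_eval T x = f x"
    and dom: "dom \<pi> \<subseteq> {..<n}" and "0 \<le> r"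
    and dominated: "\<forall>j<n. infl n (restr f \<pi>) j \<le> r * c j"
  shows "bias n (restr f \<pi>) \<le> r * dt_worst_cost n c T"
proof -
  have no_disagreement:
    "(\<Sum>x\<in>cube n. of_bool (restr f \<pi> x \<noteq> dt_eval T (fill \<pi> x)) :: real) = 0"
    by (rule sum.neutral) (simp add: restr_eq_fill T(2) fill_in_cube[OF dom])
  have "dt_cost (infl n (restr f \<pi>)) T (fill \<pi> x) \<le> r * dt_worst_cost n c T"
    if "x \<in> cube n" for x
  proof -
    have "dt_cost (infl n (restr f \<pi>)) T (fill \<pi> x) \<le> r * dt_cost c T (fill \<pi> x)"
      using T(1) dominated by (intro dt_cost_le_weights_mult) auto
    also have "\<dots> \<le> r * dt_worst_cost n c T"
      using dt_cost_le_worst_cost[OF fill_in_cube[OF dom that]] \<open>0 \<le> r\<close> by (rule mult_left_mono)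
    finally show ?thesis .
  qed
  then have "(\<Sum>x\<in>cube n. dt_cost (infl n (restr f \<pi>)) T (fill \<pi> x))
      \<le> (\<Sum>x\<in>cube n. r * dt_worst_cost n c T)"
    by (rule sum_mono)
  also have "\<dots> = 2 ^ n * (r * dt_worst_cost n c T)"
    by (simp add: card_cube)
  finally have "2 ^ n * bias n (restr f \<pi>) \<le> 2 ^ n * (r * dt_worst_cost n c T)"
    using bias_le_disagree_plus_infl_cost[OF T(1), of "restr f \<pi>" \<pi>] no_disagreement
    by linarith
  then show ?thesis
    by simp
qed

section \<open>A logarithmic potential\<close>

text \<open>Along a run, \<open>m\<close> is a running maximum of an influence \<open>x\<close>; at \<open>m = x\<close> the potential is
  the summand \<open>x (1 + ln (1/x))\<close> of the cost bound.\<close>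
definition log_potential :: "real \<Rightarrow> real \<Rightarrow> real" where
  "log_potential x m = (if m = 0 then 0 else m + x * ln (1 / m))"

lemma log_potential_ge: "0 \<le> x \<Longrightarrow> 0 \<le> m \<Longrightarrow> m \<le> 1 \<Longrightarrow> m \<le> log_potential x m"
  by (simp add: log_potential_def)

lemma log_potential_max_le:
  assumes "0 \<le> x" and "0 < m" and "m \<le> 1"
  shows "log_potential x (max m x) \<le> m + x * ln (1 / m)"
proof (cases "x \<le> m")
  case True
  then show ?thesis
    using assms by (simp add: log_potential_def max_def)
next
  case False
  then have x: "0 < x"
    using assms by simp
  have "x * ln (m / x) \<le> x * (m / x - 1)"
    using assms x by (intro mult_left_mono ln_le_minus_one) auto
  also have "\<dots> = m - x"
    using x by (simp add: field_simps)
  finally have "x * ln (m / x) \<le> m - x" .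
  moreover have "ln (m / x) = ln (1 / x) - ln (1 / m)"
    using assms x by (simp add: ln_div)
  ultimately show ?thesis
    using False assms by (simp add: log_potential_def algebra_simps)
qed

lemma log_potential_avg_le:
  assumes "0 \<le> x\<^sub>1" and "0 \<le> x\<^sub>2" and "x\<^sub>1 + x\<^sub>2 \<le> 2 * x" and "x \<le> m" and "m \<le> 1"
  shows "log_potential x\<^sub>1 (max m x\<^sub>1) + log_potential x\<^sub>2 (max m x\<^sub>2) \<le> 2 * log_potential x m"
proof (cases "m = 0")
  case True
  then show ?thesis
    using assms by (simp add: log_potential_def)
next
  case False
  then have m: "0 < m"
    using assms by simp
  have "log_potential x\<^sub>1 (max m x\<^sub>1) + log_potential x\<^sub>2 (max m x\<^sub>2)
      \<le> 2 * m + (x\<^sub>1 + x\<^sub>2) * ln (1 / m)"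
    using log_potential_max_le[OF assms(1) m assms(5)] log_potential_max_le[OF assms(2) m assms(5)]
    by (simp add: algebra_simps)
  also have "\<dots> \<le> 2 * m + (2 * x) * ln (1 / m)"
    using assms m by (intro add_left_mono mult_right_mono) auto
  also have "\<dots> = 2 * log_potential x m"
    using False by (simp add: log_potential_def algebra_simps)
  finally show ?thesis .
qed

section \<open>Runs of Warmup-IPRR\<close>

lemma ratio_pos_iff: "0 \<le> a \<Longrightarrow> 0 \<le> t \<Longrightarrow> 0 < ratio a t \<longleftrightarrow> 0 < a"
  by (auto simp: ratio_def)

lemma le_mult_if_ratio_le:
  assumes "0 \<le> a" and "0 \<le> t" and "ratio a t \<le> ereal r"
  shows "a \<le> r * t"
proof (cases "t = 0")
  case True
  then show ?thesis
    using assms by (auto simp: ratio_def split: if_splits)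
next
  case False
  then show ?thesis
    using assms by (simp add: ratio_def field_simps)
qed

abbreviation init_state :: state where
  "init_state \<equiv> (\<lambda>_. 0, Map.empty)"

lemma sel_maximizes_ratio:
  assumes "is_iprr_rule n f \<epsilon> sel" and "\<epsilon> < bias n (restr f (snd s))"
  shows "sel s < n"
    and "j < n \<Longrightarrow> ratio (infl n (restr f (snd s)) j) (fst s j)
      \<le> ratio (infl n (restr f (snd s)) (sel s)) (fst s (sel s))"
  using assms by (cases s; auto simp: is_iprr_rule_def)+

locale warmup_iprr =
  fixes n :: nat and f :: "(nat \<Rightarrow> bool) \<Rightarrow> bool" and c :: "nat \<Rightarrow> real"
    and \<epsilon> \<beta> :: real and sel :: "state \<Rightarrow> nat"
  assumes costs_nonneg: "\<forall>i<n. 0 \<le> c i"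
    and eps_pos: "0 < \<epsilon>" and beta_pos: "0 < \<beta>"
    and iprr_rule: "is_iprr_rule n f \<epsilon> sel"
begin

definition halted :: "state \<Rightarrow> bool" where
  "halted s \<longleftrightarrow> bias n (restr f (snd s)) \<le> \<epsilon>"

fun run :: "(nat \<Rightarrow> bool) \<Rightarrow> state \<Rightarrow> nat \<Rightarrow> state" where
  "run x s 0 = s"
| "run x s (Suc k) = (if halted s then s else run x (iprr_step c \<beta> sel x s) k)"

text \<open>A step reads the input only at the selected coordinate, so from a given state there
  are just two possible successors.\<close>
definition branch :: "state \<Rightarrow> bool \<Rightarrow> state" where
  "branch s b = iprr_step c \<beta> sel (\<lambda>_. b) s"

definition valid :: "state \<Rightarrow> bool" where
  "valid s \<longleftrightarrow> (\<forall>j. 0 \<le> fst s j) \<and> (\<forall>j<n. j \<notin> dom (snd s) \<longrightarrow> fst s j \<le> c j)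
     \<and> dom (snd s) \<subseteq> {..<n}"

lemma run_halted: "halted s \<Longrightarrow> run x s k = s"
  by (cases k) simp_all

lemma run_add: "run x s (k + l) = run x (run x s k) l"
  by (induction k arbitrary: s) (simp_all add: run_halted)

lemma run_eq_funpow:
  "(\<forall>k'<k. \<not> halted ((iprr_step c \<beta> sel x ^^ k') s)) \<Longrightarrow> run x s k = (iprr_step c \<beta> sel x ^^ k) s"
proof (induction k arbitrary: s)
  case (Suc k)
  then have "\<not> halted s" and "\<forall>k'<k. \<not> halted ((iprr_step c \<beta> sel x ^^ k') (iprr_step c \<beta> sel x s))"
    by (auto simp: funpow_Suc_right simp del: funpow.simps)
  then show ?case
    using Suc.IH by (simp add: funpow_Suc_right del: funpow.simps)
qed simp

lemma step_eq_branch: "iprr_step c \<beta> sel x s = branch s (x (sel s))"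
  by (simp add: branch_def iprr_step_def)

lemma branch_eq:
  "branch s b = ((fst s)(sel s := fst s (sel s) + \<beta>),
     if c (sel s) \<le> fst s (sel s) + \<beta> then (snd s)(sel s \<mapsto> b) else snd s)"
  by (simp add: branch_def iprr_step_def Let_def)

lemma selected_coordinate:
  assumes "valid s" and "\<not> halted s"
  shows "sel s < n" and "sel s \<notin> dom (snd s)" and "0 < infl n (restr f (snd s)) (sel s)"
proof -
  let ?g = "restr f (snd s)"
  have bias: "\<epsilon> < bias n ?g"
    using assms(2) by (simp add: halted_def)
  then show "sel s < n"
    by (rule sel_maximizes_ratio[OF iprr_rule])
  obtain j where j: "j < n" "0 < infl n ?g j"
    using bias_pos_imp_infl_pos[of n ?g] bias eps_pos by auto
  have nonneg: "0 \<le> fst s k" for k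
    using assms(1) by (simp add: valid_def)
  have "0 < ratio (infl n ?g j) (fst s j)"
    using j nonneg ratio_pos_iff infl_nonneg by blast
  also have "\<dots> \<le> ratio (infl n ?g (sel s)) (fst s (sel s))"
    by (rule sel_maximizes_ratio(2)[OF iprr_rule bias j(1)])
  finally show pos: "0 < infl n ?g (sel s)"
    using nonneg ratio_pos_iff infl_nonneg by blast
  then show "sel s \<notin> dom (snd s)"
    using infl_restr_fixed by force
qed

lemma valid_branch:
  assumes "valid s" and "\<not> halted s"
  shows "valid (branch s b)"
  using assms selected_coordinate[OF assms] beta_pos
  by (auto simp: valid_def branch_eq)

lemma valid_run: "valid s \<Longrightarrow> valid (run x s k)"
  by (induction k arbitrary: s) (simp_all add: step_eq_branch valid_branch)

definition slack :: "state \<Rightarrow> real" where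
  "slack s = (\<Sum>j<n. if j \<in> dom (snd s) then 0 else c j + \<beta> - fst s j)"

lemma slack_nonneg: "valid s \<Longrightarrow> 0 \<le> slack s"
  unfolding slack_def valid_def using beta_pos by (intro sum_nonneg) force

lemma slack_branch:
  assumes "valid s" and "\<not> halted s"
  shows "slack (branch s b) \<le> slack s - \<beta>"
proof -
  let ?i = "sel s"
  have i: "?i < n" "?i \<notin> dom (snd s)" "fst s ?i \<le> c ?i"
    using selected_coordinate[OF assms] assms(1) by (auto simp: valid_def)
  have "(if j \<in> dom (snd (branch s b)) then 0 else c j + \<beta> - fst (branch s b) j)
      \<le> (if j \<in> dom (snd s) then 0 else c j + \<beta> - fst s j) - (if j = ?i then \<beta> else 0)" for j
    using i beta_pos by (auto simp: branch_eq)
  then have "slack (branch s b) \<le> (\<Sum>j<n. (if j \<in> dom (snd s) then 0 else c j + \<beta> - fst s j)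
      - (if j = ?i then \<beta> else 0))"
    unfolding slack_def by (rule sum_mono)
  also have "\<dots> = slack s - \<beta>"
    using i(1) by (simp add: slack_def sum_subtractf)
  finally show ?thesis .
qed

lemma run_halted_or_slack_le:
  "valid s \<Longrightarrow> halted (run x s k) \<or> slack (run x s k) \<le> slack s - real k * \<beta>"
proof (induction k arbitrary: s)
  case (Suc k)
  show ?case
  proof (cases "halted s")
    case False
    let ?s' = "branch s (x (sel s))"
    have run: "run x s (Suc k) = run x ?s' k"
      using False by (simp add: step_eq_branch)
    have "halted (run x ?s' k) \<or> slack (run x ?s' k) \<le> slack ?s' - real k * \<beta>"
      using Suc.IH valid_branch[OF Suc.prems False] by blast
    then show ?thesis
      unfolding run using slack_branch[OF Suc.prems False, of "x (sel s)"] by (auto simp: algebra_simps)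
  qed simp
qed simp

lemma halted_run_slack:
  assumes "valid s"
  shows "halted (run x s (nat \<lceil>slack s / \<beta>\<rceil> + 1))"
proof (rule ccontr)
  let ?k = "nat \<lceil>slack s / \<beta>\<rceil> + 1"
  assume "\<not> ?thesis"
  then have "slack (run x s ?k) \<le> slack s - real ?k * \<beta>"
    using run_halted_or_slack_le[OF assms, of x ?k] by blast
  then have "0 \<le> slack s - real ?k * \<beta>"
    using slack_nonneg[OF valid_run[OF assms], of x ?k] by linarith
  moreover have "slack s / \<beta> < real ?k"
    by linarith
  ultimately show False
    using beta_pos by (simp add: field_simps)
qed

text \<open>\<open>sum_runs G s k\<close> is \<open>2 ^ n\<close> times the expectation of \<open>G x (run x s k)\<close> over the
  inputs \<open>x\<close> consistent with the bits revealed in \<open>s\<close>.\<close>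
definition sum_runs :: "((nat \<Rightarrow> bool) \<Rightarrow> state \<Rightarrow> real) \<Rightarrow> state \<Rightarrow> nat \<Rightarrow> real" where
  "sum_runs G s k = (\<Sum>u\<in>cube n. G (fill (snd s) u) (run (fill (snd s) u) s k))"

definition halts_within :: "state \<Rightarrow> nat \<Rightarrow> bool" where
  "halts_within s k \<longleftrightarrow> (\<forall>u\<in>cube n. halted (run (fill (snd s) u) s k))"

lemma sum_runs_halted: "halted s \<Longrightarrow> sum_runs G s k = (\<Sum>u\<in>cube n. G (fill (snd s) u) s)"
  by (simp add: sum_runs_def run_halted)

lemma sum_runs_Suc:
  assumes "valid s" and "\<not> halted s"
  shows "2 * sum_runs G s (Suc k) = sum_runs G (branch s True) k + sum_runs G (branch s False) k"
proof -
  let ?i = "sel s" and ?\<pi> = "snd s"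
  have i: "?i < n" "?i \<notin> dom ?\<pi>"
    using selected_coordinate[OF assms] by auto
  have run_Suc: "run x s (Suc k) = run x (branch s (x ?i)) k" for x
    using assms(2) by (simp add: step_eq_branch)
  show ?thesis
  proof (cases "c ?i \<le> fst s ?i + \<beta>")
    case True
    define H where "H x = G x (run x s (Suc k))" for x
    have "run (fill (?\<pi>(?i \<mapsto> b)) u) s (Suc k) = run (fill (?\<pi>(?i \<mapsto> b)) u) (branch s b) k" for b u
      using run_Suc[of "fill (?\<pi>(?i \<mapsto> b)) u"] by (simp add: fill_def)
    moreover have "snd (branch s b) = ?\<pi>(?i \<mapsto> b)" for b
      using True by (simp add: branch_eq)
    ultimately have "sum_runs G (branch s b) k = (\<Sum>u\<in>cube n. H (fill (?\<pi>(?i \<mapsto> b)) u))" for b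
      by (simp add: sum_runs_def H_def)
    then show ?thesis
      using sum_cube_fill_split[OF i, of H] by (simp add: sum_runs_def H_def)
  next
    case False
    then have "sum_runs G s (Suc k) = sum_runs G (branch s b) k" for b
      by (simp only: sum_runs_def run_Suc) (simp add: branch_eq)
    then show ?thesis
      by (metis mult_2)
  qed
qed

lemma halts_within_branch:
  assumes "valid s" and "\<not> halted s" and "halts_within s (Suc k)"
  shows "halts_within (branch s b) k"
proof -
  let ?G = "\<lambda>_ s'. of_bool (\<not> halted s') :: real"
  have iff: "halts_within s' k' \<longleftrightarrow> sum_runs ?G s' k' = 0" for s' k'
    unfolding halts_within_def sum_runs_def by (subst sum_nonneg_eq_0_iff) auto
  have "sum_runs ?G (branch s True) k + sum_runs ?G (branch s False) k = 0"
    using sum_runs_Suc[OF assms(1,2), of ?G k] assms(3) iff by simp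
  moreover have "0 \<le> sum_runs ?G s' k'" for s' k'
    by (simp add: sum_runs_def sum_nonneg)
  ultimately show ?thesis
    using iff by (cases b) (simp_all add: add_nonneg_eq_0_iff)
qed

lemma sum_runs_optional_stopping:
  assumes valid: "\<And>s q. J s q \<Longrightarrow> valid s"
    and stop: "\<And>s q. J s q \<Longrightarrow> halted s \<Longrightarrow> (\<Sum>u\<in>cube n. F (fill (snd s) u) s) \<le> 2 ^ n * q"
    and step: "\<And>s q. J s q \<Longrightarrow> \<not> halted s \<Longrightarrow>
      \<exists>q\<^sub>1 q\<^sub>2. J (branch s True) q\<^sub>1 \<and> J (branch s False) q\<^sub>2 \<and> q\<^sub>1 + q\<^sub>2 \<le> 2 * q"
  shows "J s q \<Longrightarrow> halts_within s k \<Longrightarrow> sum_runs F s k \<le> 2 ^ n * q"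
proof (induction k arbitrary: s q)
  case 0
  then have "halted s"
    using cube_nonempty by (auto simp: halts_within_def)
  then show ?case
    using stop[OF 0(1)] by (simp add: sum_runs_halted)
next
  case (Suc k)
  show ?case
  proof (cases "halted s")
    case True
    then show ?thesis
      using stop[OF Suc.prems(1)] by (simp add: sum_runs_halted)
  next
    case False
    obtain q\<^sub>1 q\<^sub>2 where q: "J (branch s True) q\<^sub>1" "J (branch s False) q\<^sub>2" "q\<^sub>1 + q\<^sub>2 \<le> 2 * q"
      using step[OF Suc.prems(1) False] by blast
    have "sum_runs F (branch s True) k \<le> 2 ^ n * q\<^sub>1" "sum_runs F (branch s False) k \<le> 2 ^ n * q\<^sub>2"
      using Suc.IH q(1,2) halts_within_branch[OF valid[OF Suc.prems(1)] False Suc.prems(2)] by blast+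
    moreover have "2 ^ n * q\<^sub>1 + 2 ^ n * q\<^sub>2 \<le> 2 * (2 ^ n * q)"
      using q(3) by (simp add: distrib_left[symmetric])
    ultimately show ?thesis
      using sum_runs_Suc[OF valid[OF Suc.prems(1)] False, of F k] by linarith
  qed
qed

lemma sum_runs_error_le:
  assumes "valid s" and "halts_within s k"
  shows "sum_runs (\<lambda>x s'. of_bool ((1/2 \<le> prob n (restr f (snd s'))) \<noteq> f x)) s k \<le> 2 ^ n * \<epsilon>"
proof (rule sum_runs_optional_stopping[where J="\<lambda>s q. valid s \<and> q = \<epsilon>"])
  fix s q
  assume "valid s \<and> q = \<epsilon>" and "halted s"
  have "(\<Sum>u\<in>cube n. of_bool ((1/2 \<le> prob n (restr f (snd s))) \<noteq> f (fill (snd s) u)))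
      = 2 ^ n * bias n (restr f (snd s))"
    by (simp only: restr_eq_fill[symmetric] sum_cube_of_bool prob_majority_error)
  then show "(\<Sum>u\<in>cube n. of_bool ((1/2 \<le> prob n (restr f (snd s))) \<noteq> f (fill (snd s) u))) \<le> 2 ^ n * q"
    using \<open>valid s \<and> q = \<epsilon>\<close> \<open>halted s\<close> by (simp add: halted_def)
qed (use assms valid_branch in auto)

lemma infl_le_ratio_mult_cost:
  assumes "valid s" and "\<not> halted s" and pos: "0 < fst s (sel s)" and "j < n"
  shows "infl n (restr f (snd s)) j \<le> infl n (restr f (snd s)) (sel s) / fst s (sel s) * c j"
    (is "infl n ?g j \<le> ?r * c j")
proof -
  have r: "0 \<le> ?r"
    using pos infl_nonneg by simp
  show ?thesis
  proof (cases "j \<in> dom (snd s)")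
    case True
    have "0 \<le> ?r * c j"
      using r costs_nonneg \<open>j < n\<close> by (intro mult_nonneg_nonneg) auto
    then show ?thesis
      by (simp add: infl_restr_fixed[OF True])
  next
    case False
    have bias: "\<epsilon> < bias n ?g"
      using assms(2) by (simp add: halted_def)
    have \<theta>: "0 \<le> fst s j" "fst s j \<le> c j"
      using assms(1) \<open>j < n\<close> False by (auto simp: valid_def)
    have "ratio (infl n ?g j) (fst s j) \<le> ereal ?r"
      using sel_maximizes_ratio(2)[OF iprr_rule bias \<open>j < n\<close>] pos by (simp add: ratio_def)
    then have "infl n ?g j \<le> ?r * fst s j"
      by (rule le_mult_if_ratio_le[OF infl_nonneg \<theta>(1)])
    also have "\<dots> \<le> ?r * c j"
      using \<theta>(2) r by (rule mult_left_mono)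
    finally show ?thesis .
  qed
qed

lemma investment_bound:
  assumes "valid s" and "\<not> halted s"
    and T: "dt_vars T \<subseteq> {..<n}" "\<forall>x\<in>cube n. dt_eval T x = f x"
  shows "\<epsilon> * fst s (sel s) \<le> dt_worst_cost n c T * infl n (restr f (snd s)) (sel s)"
proof (cases "fst s (sel s) = 0")
  case True
  then show ?thesis
    using dt_worst_cost_nonneg[OF T(1) costs_nonneg] infl_nonneg by simp
next
  case False
  let ?g = "restr f (snd s)" and ?\<theta> = "fst s (sel s)"
  have pos: "0 < ?\<theta>"
    using False assms(1) by (simp add: valid_def order_le_neq_trans)
  then have "bias n ?g \<le> infl n ?g (sel s) / ?\<theta> * dt_worst_cost n c T"
    using assms(1) infl_le_ratio_mult_cost[OF assms(1,2) pos] infl_nonneg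
    by (intro bias_le_worst_cost[OF T]) (auto simp: valid_def)
  then have "bias n ?g * ?\<theta> \<le> dt_worst_cost n c T * infl n ?g (sel s)"
    using pos by (simp add: field_simps)
  moreover have "\<epsilon> * ?\<theta> \<le> bias n ?g * ?\<theta>"
    using assms(2) pos by (simp add: halted_def)
  ultimately show ?thesis
    by linarith
qed

lemma infl_branch_le:
  assumes "valid s" and "\<not> halted s"
  shows "infl n (restr f (snd (branch s True))) j + infl n (restr f (snd (branch s False))) j
    \<le> 2 * infl n (restr f (snd s)) j"
proof (cases "c (sel s) \<le> fst s (sel s) + \<beta>")
  case True
  then show ?thesis
    using infl_restr_upd_le selected_coordinate(1,2)[OF assms] by (simp add: branch_eq)
qed (simp add: branch_eq)

definition potential :: "real \<Rightarrow> (nat \<Rightarrow> bool option) \<Rightarrow> (nat \<Rightarrow> real) \<Rightarrow> real" where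
  "potential W \<pi> m = (\<Sum>j<n. \<beta> + W / \<epsilon> * log_potential (infl n (restr f \<pi>) j) (m j))"

text \<open>The ghost \<open>m j\<close> is the largest influence of \<open>x\<^sub>j\<close> seen so far along the run.\<close>
definition tracks :: "real \<Rightarrow> state \<Rightarrow> (nat \<Rightarrow> real) \<Rightarrow> bool" where
  "tracks W s m \<longleftrightarrow> valid s \<and> (\<forall>j<n. infl n (restr f (snd s)) j \<le> m j \<and> m j \<le> 1
     \<and> fst s j \<le> \<beta> + W / \<epsilon> * m j)"

lemma investment_le_potential:
  assumes "0 \<le> W" and "tracks W s m"
  shows "(\<Sum>j<n. fst s j) \<le> potential W (snd s) m"
  unfolding potential_def
proof (rule sum_mono)
  fix j
  assume "j \<in> {..<n}"
  then have "infl n (restr f (snd s)) j \<le> m j" "m j \<le> 1" "fst s j \<le> \<beta> + W / \<epsilon> * m j"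
    using assms(2) by (auto simp: tracks_def)
  moreover have "W / \<epsilon> * m j \<le> W / \<epsilon> * log_potential (infl n (restr f (snd s)) j) (m j)"
    using calculation assms(1) eps_pos infl_nonneg
    by (intro mult_left_mono log_potential_ge) (auto intro: order_trans)
  ultimately show "fst s j \<le> \<beta> + W / \<epsilon> * log_potential (infl n (restr f (snd s)) j) (m j)"
    by linarith
qed

lemma tracks_branch:
  assumes T: "dt_vars T \<subseteq> {..<n}" "\<forall>x\<in>cube n. dt_eval T x = f x"
    and tracks: "tracks (dt_worst_cost n c T) s m" and "\<not> halted s"
  shows "tracks (dt_worst_cost n c T) (branch s b)
    (\<lambda>j. max (m j) (infl n (restr f (snd (branch s b))) j))"
proof -
  let ?W = "dt_worst_cost n c T" and ?i = "sel s"
  have valid: "valid s"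
    using tracks by (simp add: tracks_def)
  have Weps: "0 \<le> ?W / \<epsilon>"
    using dt_worst_cost_nonneg[OF T(1) costs_nonneg] eps_pos by simp
  have "fst s ?i \<le> ?W / \<epsilon> * m ?i"
  proof -
    have "\<epsilon> * fst s ?i \<le> ?W * m ?i"
      using investment_bound[OF valid \<open>\<not> halted s\<close> T] tracks selected_coordinate(1)[OF valid \<open>\<not> halted s\<close>]
        dt_worst_cost_nonneg[OF T(1) costs_nonneg]
      by (auto simp: tracks_def intro: order_trans mult_left_mono)
    then show ?thesis
      using eps_pos by (simp add: field_simps)
  qed
  moreover have "\<beta> + ?W / \<epsilon> * m j \<le> \<beta> + ?W / \<epsilon> * max (m j) y" for j y
    by (intro add_left_mono mult_left_mono[OF max.cobounded1 Weps])
  ultimately show ?thesis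
    using tracks valid_branch[OF valid \<open>\<not> halted s\<close>] infl_le_1
    by (fastforce simp: tracks_def branch_eq intro: order_trans)
qed

lemma potential_branch_le:
  assumes "tracks W s m" and "\<not> halted s" and "0 \<le> W"
  shows "potential W (snd (branch s True)) (\<lambda>j. max (m j) (infl n (restr f (snd (branch s True))) j))
    + potential W (snd (branch s False)) (\<lambda>j. max (m j) (infl n (restr f (snd (branch s False))) j))
    \<le> 2 * potential W (snd s) m"
proof -
  let ?x = "\<lambda>b j. infl n (restr f (snd (branch s b))) j"
  let ?p = "\<lambda>b j. log_potential (?x b j) (max (m j) (?x b j))"
  have "?p True j + ?p False j \<le> 2 * log_potential (infl n (restr f (snd s)) j) (m j)"
    if "j < n" for j
    using assms(1) that infl_branch_le[OF _ assms(2)]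
    by (intro log_potential_avg_le infl_nonneg) (auto simp: tracks_def)
  then have "W / \<epsilon> * (?p True j + ?p False j)
      \<le> W / \<epsilon> * (2 * log_potential (infl n (restr f (snd s)) j) (m j))" if "j < n" for j
    using that assms(3) eps_pos by (intro mult_left_mono) auto
  then have "(\<Sum>j<n. 2 * \<beta> + W / \<epsilon> * (?p True j + ?p False j))
      \<le> (\<Sum>j<n. 2 * (\<beta> + W / \<epsilon> * log_potential (infl n (restr f (snd s)) j) (m j)))"
    by (intro sum_mono) (simp add: algebra_simps)
  then show ?thesis
    by (simp add: potential_def sum.distrib[symmetric] sum_distrib_left algebra_simps)
qed

lemma sum_runs_cost_le:
  assumes T: "dt_vars T \<subseteq> {..<n}" "\<forall>x\<in>cube n. dt_eval T x = f x"
    and "tracks (dt_worst_cost n c T) s m" and "halts_within s k"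
  shows "sum_runs (\<lambda>_ s'. \<Sum>j<n. fst s' j) s k \<le> 2 ^ n * potential (dt_worst_cost n c T) (snd s) m"
proof (rule sum_runs_optional_stopping
    [where J="\<lambda>s q. \<exists>m. tracks (dt_worst_cost n c T) s m \<and> q = potential (dt_worst_cost n c T) (snd s) m"])
  let ?W = "dt_worst_cost n c T"
  have W: "0 \<le> ?W"
    using dt_worst_cost_nonneg[OF T(1) costs_nonneg] .
  fix s q
  assume J: "\<exists>m. tracks ?W s m \<and> q = potential ?W (snd s) m"
  then show "valid s"
    by (auto simp: tracks_def)
  show "(\<Sum>u\<in>cube n. \<Sum>j<n. fst s j) \<le> 2 ^ n * q"
    using J investment_le_potential[OF W] by (auto simp: card_cube)
  assume "\<not> halted s"
  with J show "\<exists>q\<^sub>1 q\<^sub>2. (\<exists>m. tracks ?W (branch s True) m \<and> q\<^sub>1 = potential ?W (snd (branch s True)) m)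
      \<and> (\<exists>m. tracks ?W (branch s False) m \<and> q\<^sub>2 = potential ?W (snd (branch s False)) m)
      \<and> q\<^sub>1 + q\<^sub>2 \<le> 2 * q"
    using tracks_branch[OF T] potential_branch_le[OF _ _ W] by blast
qed (use assms in auto)

definition step_bound :: nat where
  "step_bound = nat \<lceil>slack init_state / \<beta>\<rceil> + 1"

lemma valid_init: "valid init_state"
  using costs_nonneg by (simp add: valid_def)

lemma halted_run_init: "halted (run x init_state step_bound)"
  unfolding step_bound_def by (rule halted_run_slack[OF valid_init])

lemma halts_within_init: "halts_within init_state step_bound"
  by (simp add: halts_within_def halted_run_init)

lemma iprr_final_eq_run:
  "(\<exists>k. iprr_halts_at n f c \<epsilon> \<beta> sel x k) \<and> iprr_final n f c \<epsilon> \<beta> sel x = run x init_state step_bound"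
proof -
  let ?halts = "iprr_halts_at n f c \<epsilon> \<beta> sel x"
  have halts: "?halts k \<longleftrightarrow> halted (iprr_run c \<beta> sel x k)" for k
    by (simp add: iprr_halts_at_def halted_def)
  have run: "\<forall>k'<k. \<not> ?halts k' \<Longrightarrow> iprr_run c \<beta> sel x k = run x init_state k" for k
    by (simp add: halts iprr_run_def run_eq_funpow)
  have "\<exists>k\<le>step_bound. ?halts k"
  proof (cases "\<forall>k<step_bound. \<not> ?halts k")
    case True
    then show ?thesis
      using run[OF True] halted_run_init[of x] halts by (metis order_refl)
  next
    case False
    then show ?thesis
      using less_imp_le by blast
  qed
  then obtain k where k: "k \<le> step_bound" "?halts k"
    by blast
  define \<tau> where "\<tau> = iprr_time n f c \<epsilon> \<beta> sel x"
  have \<tau>: "\<tau> = (LEAST k. ?halts k)"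
    by (simp add: \<tau>_def iprr_time_def)
  have "\<tau> \<le> step_bound"
    unfolding \<tau> using Least_le[of ?halts, OF k(2)] k(1) by linarith
  moreover have before: "\<forall>k'<\<tau>. \<not> ?halts k'"
    unfolding \<tau> using not_less_Least by blast
  moreover have "halted (run x init_state \<tau>)"
    using LeastI[of ?halts, OF k(2)] run[OF before] halts by (simp add: \<tau>)
  ultimately have "run x init_state step_bound = run x init_state \<tau>"
    using run_add[of x init_state \<tau> "step_bound - \<tau>"] by (simp add: run_halted)
  moreover have "iprr_final n f c \<epsilon> \<beta> sel x = run x init_state \<tau>"
    using run[OF before] by (simp add: iprr_final_def \<tau>_def)
  ultimately show ?thesis
    using k by auto
qed

lemma output_error_le: "prob n (\<lambda>x. iprr_output n f c \<epsilon> \<beta> sel x \<noteq> f x) \<le> \<epsilon>"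
proof -
  have "2 ^ n * prob n (\<lambda>x. iprr_output n f c \<epsilon> \<beta> sel x \<noteq> f x)
      = sum_runs (\<lambda>x s'. of_bool ((1/2 \<le> prob n (restr f (snd s'))) \<noteq> f x)) init_state step_bound"
    by (simp add: sum_cube_of_bool[symmetric] sum_runs_def iprr_output_def iprr_final_eq_run)
  also have "\<dots> \<le> 2 ^ n * \<epsilon>"
    by (rule sum_runs_error_le[OF valid_init halts_within_init])
  finally show ?thesis
    by simp
qed

lemma avg_cost_le:
  assumes "dt_vars T \<subseteq> {..<n}" and "\<forall>x\<in>cube n. dt_eval T x = f x"
  shows "iprr_avg_cost n f c \<epsilon> \<beta> sel
    \<le> \<beta> * real n + dt_worst_cost n c T * ((\<Sum>i<n. log_potential (infl n f i) (infl n f i)) / \<epsilon>)"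
proof -
  let ?W = "dt_worst_cost n c T"
  have "0 \<le> ?W / \<epsilon> * infl n f j" for j
    using dt_worst_cost_nonneg[OF assms(1) costs_nonneg] eps_pos infl_nonneg by simp
  then have "tracks ?W init_state (infl n f)"
    using valid_init beta_pos infl_le_1 by (auto simp: tracks_def intro: add_nonneg_nonneg less_imp_le)
  then have "(\<Sum>x\<in>cube n. iprr_cost n f c \<epsilon> \<beta> sel x) \<le> 2 ^ n * potential ?W Map.empty (infl n f)"
    using sum_runs_cost_le[OF assms _ halts_within_init]
    by (simp add: sum_runs_def iprr_cost_def iprr_final_eq_run)
  also have "potential ?W Map.empty (infl n f)
      = \<beta> * real n + ?W * ((\<Sum>i<n. log_potential (infl n f i) (infl n f i)) / \<epsilon>)"
    by (simp add: potential_def sum.distrib sum_distrib_left sum_divide_distrib)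
  finally show ?thesis
    by (simp add: iprr_avg_cost_def field_simps)
qed

end

lemma le_add_Inf_mult:
  fixes A :: "real set"
  assumes "A \<noteq> {}" and "0 \<le> s" and bound: "\<And>w. w \<in> A \<Longrightarrow> a \<le> b + w * s"
  shows "a \<le> b + Inf A * s"
proof (cases "s = 0")
  case True
  then show ?thesis
    using assms by auto
next
  case False
  then have "(a - b) / s \<le> w" if "w \<in> A" for w
    using bound[OF that] \<open>0 \<le> s\<close> by (simp add: field_simps)
  then have "(a - b) / s \<le> Inf A"
    by (rule cInf_greatest[OF \<open>A \<noteq> {}\<close>])
  then show ?thesis
    using False \<open>0 \<le> s\<close> by (simp add: field_simps)
qed

theorem mainTheorem2:
  fixes n :: nat and f :: "(nat \<Rightarrow> bool) \<Rightarrow> bool" and c :: "nat \<Rightarrow> real"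
    and \<epsilon> \<beta> :: real and sel :: "state \<Rightarrow> nat"
  assumes "\<forall>i<n. c i \<ge> 0"
    and "0 < \<epsilon>" and "\<epsilon> \<le> 1/2" and "\<beta> > 0"
    and "is_iprr_rule n f \<epsilon> sel"
  shows "(\<forall>x\<in>cube n. \<exists>k. iprr_halts_at n f c \<epsilon> \<beta> sel x k)
    \<and> prob n (\<lambda>x. iprr_output n f c \<epsilon> \<beta> sel x \<noteq> f x) \<le> \<epsilon>
    \<and> iprr_avg_cost n f c \<epsilon> \<beta> sel
        \<le> \<beta> * real n + opt_w0 n f c / \<epsilon> *
           (\<Sum>i<n. if infl n f i = 0 then 0 else infl n f i * (1 + ln (1 / infl n f i)))"
proof -
  interpret warmup_iprr n f c \<epsilon> \<beta> sel
    using assms by unfold_locales auto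
  let ?S = "\<Sum>i<n. log_potential (infl n f i) (infl n f i)"
  have "0 \<le> ?S"
    using infl_nonneg infl_le_1 by (intro sum_nonneg order_trans[OF _ log_potential_ge]) auto
  then have "iprr_avg_cost n f c \<epsilon> \<beta> sel \<le> \<beta> * real n + opt_w0 n f c * (?S / \<epsilon>)"
    unfolding opt_w0_def using ex_dtree_computing[of n f] avg_cost_le assms(2)
    by (intro le_add_Inf_mult) auto
  moreover have "log_potential (infl n f i) (infl n f i)
      = (if infl n f i = 0 then 0 else infl n f i * (1 + ln (1 / infl n f i)))" for i
    by (simp add: log_potential_def algebra_simps)
  ultimately show ?thesis
    using iprr_final_eq_run output_error_le by simp
qed

end
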